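(* Let $V_0\subseteq\mathbb{R}^n$ be a finite set, $\mathcal{K}$ a compact topological space, and for each $v\in V_0$ let $r_v:\mathcal{K}\to[-\infty,\infty)$ be continuous. For $\kappa\in\mathcal{K}$ set $f_\kappa(x)=\max_{v\in V_0}(\langle x,v\rangle+r_v(\kappa))$ for $x\in\mathbb{R}^n$, and assume that for every $\kappa$ the set $V_\kappa=\{v\in V_0:r_v(\kappa)>-\infty\}$ is nonempty (so $f_\kappa$ is real-valued) and that the point $u$ of minimal Euclidean norm in $\operatorname{conv}(V_\kappa)$ is the same for all $\kappa\in\mathcal{K}$. Then there is $C\in\mathbb{R}$ such that $f_\kappa(x)\ge\langle x,u\rangle+C$ for all $\kappa\in\mathcal{K}$ and all $x\in\mathbb{R}^n$.
   Context: $[-\infty,\infty)$ carries its usual order topology. *)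

theory Defs
  imports "HOL-Analysis.Analysis" "HOL-Library.Extended_Real"
begin

definition min_norm_point :: "'a::real_normed_vector set \<Rightarrow> 'a \<Rightarrow> bool" where
  "min_norm_point S u \<longleftrightarrow> u \<in> S \<and> (\<forall>w\<in>S. norm u \<le> norm w)"

end

theory Submission
  imports Defs
begin

text \<open>
  Fix \<open>\<kappa>\<^sub>0\<close>. On a
  neighbourhood of \<open>\<kappa>\<^sub>0\<close> the finitely many \<open>r\<^sub>v\<close> with \<open>v \<in> V\<^sub>\<kappa>\<^sub>0\<close> stay above
  \<open>r\<^sub>v(\<kappa>\<^sub>0) - 1\<close>. Writing \<open>u = \<Sum> \<lambda>\<^sub>v v\<close> over \<open>V\<^sub>\<kappa>\<^sub>0\<close>, the affine function
  \<open>\<langle>x,u\<rangle> + \<Sum> \<lambda>\<^sub>v (r\<^sub>v(\<kappa>\<^sub>0) - 1)\<close> is the same convex combination of the pieces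
  \<open>\<langle>x,v\<rangle> + r\<^sub>v(\<kappa>\<^sub>0) - 1\<close>, so at every \<open>x\<close> it lies below one of them and hence below \<open>f\<^sub>\<kappa>\<close>.
  By compactness finitely many of these local constants suffice.
\<close>

lemma convex_combination_le_some:
  fixes g l :: "'a \<Rightarrow> real"
  assumes "finite W" "W \<noteq> {}" "\<forall>x\<in>W. 0 \<le> l x" "sum l W = 1"
  shows "\<exists>v\<in>W. (\<Sum>x\<in>W. l x * g x) \<le> g v"
proof -
  have "Max (g ` W) \<in> g ` W"
    using assms(1,2) by simp
  then obtain v where "v \<in> W" "g v = Max (g ` W)"
    by auto
  then have v: "v \<in> W" "\<forall>w\<in>W. g w \<le> g v"
    using assms(1) by auto
  have "(\<Sum>x\<in>W. l x * g x) \<le> (\<Sum>x\<in>W. l x * g v)"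
    by (rule sum_mono) (use assms(3) v in \<open>auto intro: mult_left_mono\<close>)
  also have "\<dots> = g v"
    using assms(4) by (simp add: sum_distrib_right[symmetric])
  finally show ?thesis
    using v by blast
qed

lemma convex_hull_affine_minorant:
  fixes W :: "'a::real_inner set" and a :: "'a \<Rightarrow> real"
  assumes "finite W" "u \<in> convex hull W"
  obtains c where "\<And>x. \<exists>v\<in>W. x \<bullet> u + c \<le> x \<bullet> v + a v"
proof -
  obtain l where l: "\<forall>v\<in>W. 0 \<le> l v" "sum l W = 1" "(\<Sum>v\<in>W. l v *\<^sub>R v) = u"
    using assms convex_hull_finite by blast
  have "W \<noteq> {}"
    using assms(2) by auto
  have "\<exists>v\<in>W. x \<bullet> u + (\<Sum>v\<in>W. l v * a v) \<le> x \<bullet> v + a v" for x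
  proof -
    have "x \<bullet> u + (\<Sum>v\<in>W. l v * a v) = (\<Sum>v\<in>W. l v * (x \<bullet> v + a v))"
      by (simp add: l(3)[symmetric] inner_sum_right distrib_left sum.distrib)
    then show ?thesis
      using convex_combination_le_some[OF assms(1) \<open>W \<noteq> {}\<close> l(1,2)] by simp
  qed
  then show thesis
    using that by blast
qed

lemma continuous_maps_eventually_above:
  fixes r :: "'i \<Rightarrow> 'k \<Rightarrow> 'a::linorder_topology"
  assumes "finite W" "\<And>v. v \<in> W \<Longrightarrow> continuous_map K euclidean (r v)"
    and "k0 \<in> topspace K" "\<And>v. v \<in> W \<Longrightarrow> a v < r v k0"
  obtains N where "openin K N" "k0 \<in> N" "\<And>\<kappa> v. \<kappa> \<in> N \<Longrightarrow> v \<in> W \<Longrightarrow> a v < r v \<kappa>"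
proof
  let ?N = "(\<Inter>v\<in>W. {\<kappa> \<in> topspace K. r v \<kappa> \<in> {a v<..}}) \<inter> topspace K"
  show "openin K ?N"
    using assms(1,2) by (intro openin_INT openin_continuous_map_preimage) auto
  show "k0 \<in> ?N"
    using assms(3,4) by auto
qed auto

lemma compact_space_uniform_lower_bound:
  fixes P :: "'k \<Rightarrow> real \<Rightarrow> bool"
  assumes "compact_space K"
    and mono: "\<And>\<kappa> c c'. P \<kappa> c \<Longrightarrow> c' \<le> c \<Longrightarrow> P \<kappa> c'"
    and local: "\<And>k0. k0 \<in> topspace K \<Longrightarrow> \<exists>N c. openin K N \<and> k0 \<in> N \<and> (\<forall>\<kappa>\<in>N. P \<kappa> c)"
  shows "\<exists>C. \<forall>\<kappa>\<in>topspace K. P \<kappa> C"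
proof -
  obtain N c where N: "\<And>k0. k0 \<in> topspace K \<Longrightarrow> openin K (N k0) \<and> k0 \<in> N k0 \<and> (\<forall>\<kappa>\<in>N k0. P \<kappa> (c k0))"
    using local by metis
  have "\<forall>U \<in> N ` topspace K. openin K U" "topspace K \<subseteq> \<Union>(N ` topspace K)"
    using N by auto
  then obtain F where F: "finite F" "F \<subseteq> N ` topspace K" "topspace K \<subseteq> \<Union>F"
    using assms(1) unfolding compact_space_alt by meson
  then obtain T where T: "T \<subseteq> topspace K" "finite T" "topspace K \<subseteq> (\<Union>t\<in>T. N t)"
    by (metis finite_subset_image)
  have "P \<kappa> (Min (c ` T))" if \<kappa>: "\<kappa> \<in> topspace K" for \<kappa>
  proof -
    obtain t where t: "t \<in> T" "\<kappa> \<in> N t"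
      using T(3) \<kappa> by blast
    then have "P \<kappa> (c t)" "Min (c ` T) \<le> c t"
      using N[of t] T by auto
    then show ?thesis
      by (rule mono)
  qed
  then show ?thesis
    by blast
qed

lemma max_affine_locally_above_affine:
  fixes V0 :: "'a::real_inner set" and r :: "'a \<Rightarrow> 'k \<Rightarrow> ereal"
  assumes "finite V0"
    and "\<And>v. v \<in> V0 \<Longrightarrow> continuous_map K euclidean (r v)"
    and "k0 \<in> topspace K"
    and "\<And>v. v \<in> V0 \<Longrightarrow> r v k0 < \<infinity>"
    and "u \<in> convex hull {v \<in> V0. r v k0 > -\<infinity>}"
  obtains N c where "openin K N" "k0 \<in> N"
    "\<And>\<kappa> x. \<kappa> \<in> N \<Longrightarrow> ereal (x \<bullet> u + c) \<le> Max ((\<lambda>v. ereal (x \<bullet> v) + r v \<kappa>) ` V0)"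
proof -
  define W where "W = {v \<in> V0. r v k0 > -\<infinity>}"
  define a where "a v = real_of_ereal (r v k0) - 1" for v
  have "finite W" "W \<subseteq> V0"
    using assms(1) by (auto simp: W_def)
  have "ereal (a v) < r v k0" if "v \<in> W" for v
    using that assms(4) by (cases "r v k0") (auto simp: W_def a_def)
  moreover have "continuous_map K euclidean (r v)" if "v \<in> W" for v
    using that \<open>W \<subseteq> V0\<close> assms(2) by blast
  ultimately obtain N where N: "openin K N" "k0 \<in> N"
    "\<And>\<kappa> v. \<kappa> \<in> N \<Longrightarrow> v \<in> W \<Longrightarrow> ereal (a v) < r v \<kappa>"
    using continuous_maps_eventually_above[OF \<open>finite W\<close> _ assms(3), of r a] by metis
  have "u \<in> convex hull W"
    using assms(5) by (simp add: W_def)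
  then obtain c where c: "\<And>x. \<exists>v\<in>W. x \<bullet> u + c \<le> x \<bullet> v + a v"
    using convex_hull_affine_minorant[OF \<open>finite W\<close>, where a = a] by blast
  have "ereal (x \<bullet> u + c) \<le> Max ((\<lambda>v. ereal (x \<bullet> v) + r v \<kappa>) ` V0)" if "\<kappa> \<in> N" for \<kappa> x
  proof -
    obtain v where v: "v \<in> W" "x \<bullet> u + c \<le> x \<bullet> v + a v"
      using c by blast
    have "ereal (x \<bullet> u + c) \<le> ereal (x \<bullet> v) + ereal (a v)"
      using v(2) by simp
    also have "\<dots> \<le> ereal (x \<bullet> v) + r v \<kappa>"
      using N(3)[OF that v(1)] by (intro add_left_mono) simp
    also have "\<dots> \<le> Max ((\<lambda>v. ereal (x \<bullet> v) + r v \<kappa>) ` V0)"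
      using v(1) \<open>W \<subseteq> V0\<close> assms(1) by (intro Max_ge) auto
    finally show ?thesis .
  qed
  then show thesis
    by (rule that[OF N(1,2)])
qed

theorem lemma4p9:
  fixes V0 :: "(real ^ 'n) set"
    and K :: "'k topology"
    and r :: "real ^ 'n \<Rightarrow> 'k \<Rightarrow> ereal"
    and u :: "real ^ 'n"
  assumes "finite V0"
    and "compact_space K"
    and "\<And>v. v \<in> V0 \<Longrightarrow> continuous_map K (euclidean :: ereal topology) (r v)"
    and "\<And>v \<kappa>. v \<in> V0 \<Longrightarrow> \<kappa> \<in> topspace K \<Longrightarrow> r v \<kappa> < \<infinity>"
    and "\<And>\<kappa>. \<kappa> \<in> topspace K \<Longrightarrow> {v \<in> V0. r v \<kappa> > -\<infinity>} \<noteq> {}"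
    and "\<And>\<kappa>. \<kappa> \<in> topspace K \<Longrightarrow>
           min_norm_point (convex hull {v \<in> V0. r v \<kappa> > -\<infinity>}) u"
  shows "\<exists>C::real. \<forall>\<kappa>\<in>topspace K. \<forall>x::real ^ 'n.
           Max ((\<lambda>v. ereal (x \<bullet> v) + r v \<kappa>) ` V0) \<ge> ereal (x \<bullet> u + C)"
proof (rule compact_space_uniform_lower_bound[OF assms(2),
    where P = "\<lambda>\<kappa> C. \<forall>x. ereal (x \<bullet> u + C) \<le> Max ((\<lambda>v. ereal (x \<bullet> v) + r v \<kappa>) ` V0)"])
  fix \<kappa> and c c' :: real
  assume bound: "\<forall>x. ereal (x \<bullet> u + c) \<le> Max ((\<lambda>v. ereal (x \<bullet> v) + r v \<kappa>) ` V0)"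
    and "c' \<le> c"
  show "\<forall>x. ereal (x \<bullet> u + c') \<le> Max ((\<lambda>v. ereal (x \<bullet> v) + r v \<kappa>) ` V0)"
  proof
    fix x :: "real ^ 'n"
    have "ereal (x \<bullet> u + c') \<le> ereal (x \<bullet> u + c)"
      using \<open>c' \<le> c\<close> by simp
    also have "\<dots> \<le> Max ((\<lambda>v. ereal (x \<bullet> v) + r v \<kappa>) ` V0)"
      using bound ..
    finally show "ereal (x \<bullet> u + c') \<le> Max ((\<lambda>v. ereal (x \<bullet> v) + r v \<kappa>) ` V0)" .
  qed
next
  fix k0 assume k0: "k0 \<in> topspace K"
  have hull: "u \<in> convex hull {v \<in> V0. r v k0 > -\<infinity>}"
    using assms(6)[OF k0] by (simp add: min_norm_point_def)
  obtain N c where N: "openin K N" "k0 \<in> N"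
    "\<And>\<kappa> x. \<kappa> \<in> N \<Longrightarrow> ereal (x \<bullet> u + c) \<le> Max ((\<lambda>v. ereal (x \<bullet> v) + r v \<kappa>) ` V0)"
    using max_affine_locally_above_affine[OF assms(1,3) k0 assms(4)[OF _ k0] hull] by blast
  show "\<exists>N c. openin K N \<and> k0 \<in> N \<and>
      (\<forall>\<kappa>\<in>N. \<forall>x. ereal (x \<bullet> u + c) \<le> Max ((\<lambda>v. ereal (x \<bullet> v) + r v \<kappa>) ` V0))"
    using N by blast
qed

end
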